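(* Let the setting and the algorithm RandProx-FL be as in the context, and suppose $0<\gamma<\frac{2}{L}$. For $t\ge0$ let $$\Psi^t:=\sum_{i=1}^n\left(\frac{1}{\gamma}\|x_i^t-x^\star\|^2+\gamma(1+\omega)^2\|u_i^t-u_i^\star\|^2\right),$$ where $x^\star$ is the unique minimizer of $\sum_{i=1}^n f_i$ and $u_i^\star:=-\nabla f_i(x^\star)$. Then for every $t\ge0$, $\mathbb{E}[\Psi^t]\le c^t\Psi^0$, where $$c:=\max\left((1-\gamma\mu)^2,\ (\gamma L-1)^2,\ 1-\frac{1}{(1+\omega)^2}\right)<1.$$ Moreover, every $(x_i^t)_t$ and $(\hat{x}_i^t)_t$ converges to $x^\star$ and every $(u_i^t)_t$ converges to $u_i^\star$, almost surely.
   Context: $d,n\ge1$; each $f_i:\mathbb{R}^d\to\mathbb{R}$, $i=1,\dots,n$, is $\mu$-strongly convex and $L$-smooth ($\nabla f_i$ $L$-Lipschitz), $L\ge\mu>0$. Problem: minimize $\sum_{i=1}^n f_i(x)$ over $x\in\mathbb{R}^d$. Algorithm RandProx-FL: inputs $(x_i^0)_{i=1}^n,(u_i^0)_{i=1}^n\in(\mathbb{R}^d)^n$ with $\sum_i u_i^0=0$, $\gamma>0$, $\omega\ge0$; for $t\ge0$: for each $i$, $\hat{x}_i^t:=x_i^t-\gamma\nabla f_i(x_i^t)-\gamma u_i^t$ and $a_i^t:=\mathcal{R}^t(\hat{x}_i^t)$; $a^t:=\frac1n\sum_i a_i^t$; for each $i$, $d_i^t:=a_i^t-a^t$, $u_i^{t+1}:=u_i^t+\frac{1}{\gamma(1+\omega)^2}d_i^t$,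 $x_i^{t+1}:=\hat{x}_i^t-\frac{1}{1+\omega}d_i^t$. Here, at each iteration $t$, the same random linear operator $\mathcal{R}^t$ on $\mathbb{R}^d$ is applied at every $i$; with $\mathcal{F}_t$ the $\sigma$-algebra generated by the iterates $(x_i^s,u_i^s)_{i}$, $s\le t$, it satisfies $\mathbb{E}[\mathcal{R}^t(y)\mid\mathcal{F}_t]=y$ and $\mathbb{E}[\|\mathcal{R}^t(y)-y\|^2\mid\mathcal{F}_t]\le\omega\|y\|^2$ for every $\mathcal{F}_t$-measurable random vector $y\in\mathbb{R}^d$. *)

theory Defs
  imports "HOL-Probability.Probability"
begin

definition strongly_convex_on :: "'a::real_normed_vector set \<Rightarrow> real \<Rightarrow> ('a \<Rightarrow> real) \<Rightarrow> bool" where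
  "strongly_convex_on S mu f \<longleftrightarrow>
     (\<forall>x\<in>S. \<forall>y\<in>S. \<forall>s::real. 0 \<le> s \<and> s \<le> 1 \<longrightarrow>
        f ((1 - s) *\<^sub>R x + s *\<^sub>R y) \<le> (1 - s) * f x + s * f y - mu / 2 * s * (1 - s) * (norm (x - y))\<^sup>2)"

text \<open>One iteration of RandProx-FL. Agents are indexed by i < n; g i is the gradient of f i;
  Rop is the (realised) linear operator of the current iteration; the state is (x, u).\<close>
definition rpfl_xhat :: "(nat \<Rightarrow> 'd::euclidean_space \<Rightarrow> 'd) \<Rightarrow> real \<Rightarrow> (nat \<Rightarrow> 'd) \<times> (nat \<Rightarrow> 'd) \<Rightarrow> nat \<Rightarrow> 'd" where
  "rpfl_xhat g \<gamma> st i = fst st i - \<gamma> *\<^sub>R g i (fst st i) - \<gamma> *\<^sub>R snd st i"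

definition rpfl_step :: "nat \<Rightarrow> (nat \<Rightarrow> 'd::euclidean_space \<Rightarrow> 'd) \<Rightarrow> real \<Rightarrow> real \<Rightarrow> ('d \<Rightarrow> 'd)
    \<Rightarrow> (nat \<Rightarrow> 'd) \<times> (nat \<Rightarrow> 'd) \<Rightarrow> (nat \<Rightarrow> 'd) \<times> (nat \<Rightarrow> 'd)" where
  "rpfl_step n g \<gamma> \<omega> Rop st =
     (let xh = rpfl_xhat g \<gamma> st;
          a = (\<lambda>i. Rop (xh i));
          abar = (1 / real n) *\<^sub>R (\<Sum>j<n. a j);
          d = (\<lambda>i. a i - abar)
      in (\<lambda>i. xh i - (1 / (1 + \<omega>)) *\<^sub>R d i,
          \<lambda>i. snd st i + (1 / (\<gamma> * (1 + \<omega>)\<^sup>2)) *\<^sub>R d i))"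

primrec rpfl :: "nat \<Rightarrow> (nat \<Rightarrow> 'd::euclidean_space \<Rightarrow> 'd) \<Rightarrow> real \<Rightarrow> real
    \<Rightarrow> (nat \<Rightarrow> 'w \<Rightarrow> 'd \<Rightarrow> 'd) \<Rightarrow> (nat \<Rightarrow> 'd) \<Rightarrow> (nat \<Rightarrow> 'd) \<Rightarrow> nat \<Rightarrow> 'w
    \<Rightarrow> (nat \<Rightarrow> 'd) \<times> (nat \<Rightarrow> 'd)" where
  "rpfl n g \<gamma> \<omega> R x0 u0 0 w = (x0, u0)"
| "rpfl n g \<gamma> \<omega> R x0 u0 (Suc t) w = rpfl_step n g \<gamma> \<omega> (R t w) (rpfl n g \<gamma> \<omega> R x0 u0 t w)"

definition rpfl_filt :: "'w measure \<Rightarrow> nat \<Rightarrow> (nat \<Rightarrow> 'd::euclidean_space \<Rightarrow> 'd) \<Rightarrow> real \<Rightarrow> real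
    \<Rightarrow> (nat \<Rightarrow> 'w \<Rightarrow> 'd \<Rightarrow> 'd) \<Rightarrow> (nat \<Rightarrow> 'd) \<Rightarrow> (nat \<Rightarrow> 'd) \<Rightarrow> nat \<Rightarrow> 'w measure" where
  "rpfl_filt M n g \<gamma> \<omega> R x0 u0 t =
     sigma (space M)
       ({(\<lambda>w. fst (rpfl n g \<gamma> \<omega> R x0 u0 s w) i) -` B \<inter> space M | s i B. s \<le> t \<and> i < n \<and> B \<in> sets borel}
      \<union> {(\<lambda>w. snd (rpfl n g \<gamma> \<omega> R x0 u0 s w) i) -` B \<inter> space M | s i B. s \<le> t \<and> i < n \<and> B \<in> sets borel})"

end

theory Submission
  imports Defs
begin

text \<open>
  For a \<mu>-strongly convex function with L-Lipschitz gradient, the gradient step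
  x \<mapsto> x - \<gamma> \<nabla>f(x) contracts squared distances by the factor max((1-\<gamma>\<mu>)^2, (\<gamma>L-1)^2).
  Conditionally on the past, the compressed correction R(y) is unbiased with second moment at
  most (1+\<omega>)|y|^2. Expanding \<Psi>(t+1) and taking conditional expectations, the cross terms
  cancel because the dual errors u_i - u_i* and the centred points sum to zero over i; what
  remains is the contraction of the gradient step in the primal part and the factor
  1 - 1/(1+\<omega>)^2 in the dual part, whence E \<Psi>(t+1) \<le> c E \<Psi>(t). Since \<Sum>_t c^t < \<infinity>, the
  series \<Sum>_t \<Psi>(t) is almost surely finite, so \<Psi>(t) \<rightarrow> 0 almost surely.
\<close>

section \<open>Strongly convex functions with Lipschitz gradient\<close>

lemma has_real_derivative_along_line:
  fixes f :: "'a::real_inner \<Rightarrow> real"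
  assumes grad: "\<And>z. GDERIV f z :> g z"
  shows "((\<lambda>t. f (x + t *\<^sub>R v)) has_real_derivative g (x + t *\<^sub>R v) \<bullet> v) (at t)"
proof -
  have "((\<lambda>t. x + t *\<^sub>R v) has_derivative (\<lambda>s. s *\<^sub>R v)) (at t)"
    by (auto intro!: derivative_eq_intros)
  from has_derivative_compose[OF this grad[unfolded gderiv_def]]
  have "((\<lambda>t. f (x + t *\<^sub>R v)) has_derivative (\<lambda>s. (s *\<^sub>R v) \<bullet> g (x + t *\<^sub>R v))) (at t)" .
  moreover have "(\<lambda>s. (s *\<^sub>R v) \<bullet> g (x + t *\<^sub>R v)) = (*) (g (x + t *\<^sub>R v) \<bullet> v)"
    by (auto simp: inner_commute)
  ultimately show ?thesis
    by (simp add: has_field_derivative_def)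
qed

lemma gradient_lipschitz_upper_bound:
  fixes f :: "'a::real_inner \<Rightarrow> real"
  assumes grad: "\<And>z. GDERIV f z :> g z"
    and lip: "\<And>x y. norm (g x - g y) \<le> L * norm (x - y)"
  shows "f y \<le> f x + g x \<bullet> (y - x) + L / 2 * (norm (y - x))\<^sup>2"
proof -
  define v where "v = y - x"
  define \<phi> where "\<phi> t = f (x + t *\<^sub>R v) - t * (g x \<bullet> v) - L / 2 * t\<^sup>2 * (norm v)\<^sup>2" for t
  have "\<phi> 1 \<le> \<phi> 0"
  proof (rule DERIV_nonpos_imp_nonincreasing[of 0 1])
    fix t :: real
    assume t: "0 \<le> t" "t \<le> 1"
    have D: "(\<phi> has_real_derivative (g (x + t *\<^sub>R v) \<bullet> v - g x \<bullet> v - L * t * (norm v)\<^sup>2)) (at t)"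
      unfolding \<phi>_def
      by (rule derivative_eq_intros has_real_derivative_along_line[OF grad] refl | simp)+
    have "g (x + t *\<^sub>R v) \<bullet> v - g x \<bullet> v = (g (x + t *\<^sub>R v) - g x) \<bullet> v"
      by (simp add: inner_diff_left)
    also have "\<dots> \<le> norm (g (x + t *\<^sub>R v) - g x) * norm v"
      by (rule norm_cauchy_schwarz)
    also have "\<dots> \<le> (L * norm (t *\<^sub>R v)) * norm v"
      using lip[of "x + t *\<^sub>R v" x] by (intro mult_right_mono) auto
    also have "\<dots> = L * t * (norm v)\<^sup>2"
      using t by (simp add: power2_eq_square)
    finally show "\<exists>y. (\<phi> has_real_derivative y) (at t) \<and> y \<le> 0"
      using D by auto
  qed simp
  then show ?thesis
    by (simp add: \<phi>_def v_def)
qed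

lemma strongly_convex_gradient_lower_bound:
  fixes f :: "'a::real_inner \<Rightarrow> real"
  assumes grad: "\<And>z. GDERIV f z :> g z"
    and sc: "strongly_convex_on UNIV \<mu> f"
  shows "f x + g x \<bullet> (y - x) + \<mu> / 2 * (norm (y - x))\<^sup>2 \<le> f y"
proof -
  define v where "v = y - x"
  have "((\<lambda>t. f (x + t *\<^sub>R v)) has_real_derivative g x \<bullet> v) (at 0)"
    using has_real_derivative_along_line[OF grad, of x v 0] by simp
  then have slope: "((\<lambda>s. (f (x + s *\<^sub>R v) - f x) / s) \<longlongrightarrow> g x \<bullet> v) (at_right 0)"
    unfolding has_field_derivative_iff by (auto intro: tendsto_mono[OF at_le])
  have bound: "((\<lambda>s. f y - f x - \<mu> / 2 * (1 - s) * (norm v)\<^sup>2)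
      \<longlongrightarrow> f y - f x - \<mu> / 2 * (1 - 0) * (norm v)\<^sup>2) (at_right 0)"
    by (intro tendsto_intros)
  have "\<forall>\<^sub>F s in at_right 0. (f (x + s *\<^sub>R v) - f x) / s \<le> f y - f x - \<mu> / 2 * (1 - s) * (norm v)\<^sup>2"
  proof -
    have "\<forall>\<^sub>F s in at_right (0::real). s < 1"
      using eventually_at_right_field zero_less_one by blast
    moreover have "\<forall>\<^sub>F s in at_right (0::real). 0 < s"
      by (rule eventually_at_right_less)
    ultimately show ?thesis
    proof eventually_elim
      case (elim s)
      have "f ((1 - s) *\<^sub>R x + s *\<^sub>R y) \<le> (1 - s) * f x + s * f y - \<mu> / 2 * s * (1 - s) * (norm (x - y))\<^sup>2"
        using sc elim unfolding strongly_convex_on_def by auto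
      moreover have "(1 - s) *\<^sub>R x + s *\<^sub>R y = x + s *\<^sub>R v"
        by (simp add: v_def algebra_simps)
      moreover have "norm (x - y) = norm v"
        by (simp add: v_def norm_minus_commute)
      ultimately have "f (x + s *\<^sub>R v) - f x \<le> s * (f y - f x - \<mu> / 2 * (1 - s) * (norm v)\<^sup>2)"
        by (simp add: algebra_simps)
      then show ?case
        using elim by (simp add: divide_le_eq mult.commute)
    qed
  qed
  then have "g x \<bullet> v \<le> f y - f x - \<mu> / 2 * (1 - 0) * (norm v)\<^sup>2"
    by (intro tendsto_le[OF _ bound slope]) simp
  then show ?thesis
    by (simp add: v_def)
qed

text \<open>For K > 0 take s = 1/K; for K = 0 let s grow.\<close>
lemma le_mult_if_forall_quadratic_le:
  fixes P Q K :: real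
  assumes H: "\<And>s. 2 * s * Q - K * s\<^sup>2 * Q \<le> P" and Q: "0 \<le> Q" and K: "0 \<le> K"
  shows "Q \<le> K * P"
proof (cases "K = 0")
  case True
  show ?thesis
  proof (rule ccontr)
    assume "\<not> Q \<le> K * P"
    with True Q have "Q > 0" by simp
    have "2 * ((\<bar>P\<bar> + 1) / Q) * Q - K * ((\<bar>P\<bar> + 1) / Q)\<^sup>2 * Q \<le> P" by (rule H)
    with True \<open>Q > 0\<close> show False by simp
  qed
next
  case False
  with K have "K > 0" by simp
  have "2 * (1 / K) * Q - K * (1 / K)\<^sup>2 * Q \<le> P" by (rule H)
  with \<open>K > 0\<close> show ?thesis
    by (simp add: power2_eq_square field_simps)
qed

text \<open>Baillon--Haddad: bound the divergences b x (y - s v) and b y (x + s v) from both sides,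
  where v = G y - G x, and optimise over s.\<close>
lemma cocoercive_if_bregman_bounds:
  fixes h :: "'a::real_inner \<Rightarrow> real"
  assumes lower: "\<And>x y. 0 \<le> h y - h x - G x \<bullet> (y - x)"
    and upper: "\<And>x y. h y - h x - G x \<bullet> (y - x) \<le> K / 2 * (norm (y - x))\<^sup>2"
    and K: "0 \<le> K"
  shows "(norm (G x - G y))\<^sup>2 \<le> K * ((G x - G y) \<bullet> (x - y))"
proof -
  define b where "b a z = h z - h a - G a \<bullet> (z - a)" for a z
  have b_split: "b a z = b a y + b y z + (G y - G a) \<bullet> (z - y)" for a y z
    unfolding b_def by (simp add: inner_diff_left inner_diff_right algebra_simps)
  have b0: "0 \<le> b a z" and bK: "b a z \<le> K / 2 * (norm (z - a))\<^sup>2" for a z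
    using lower upper by (simp_all add: b_def)
  define v where "v = G y - G x"
  have "2 * s * (norm v)\<^sup>2 - K * s\<^sup>2 * (norm v)\<^sup>2 \<le> v \<bullet> (y - x)" for s
  proof -
    have "0 \<le> b x (y - s *\<^sub>R v)"
      by (rule b0)
    also have "\<dots> = b x y + b y (y - s *\<^sub>R v) - s * (norm v)\<^sup>2"
      by (subst b_split[of x _ y]) (simp add: v_def power2_norm_eq_inner)
    also have "\<dots> \<le> b x y + K / 2 * s\<^sup>2 * (norm v)\<^sup>2 - s * (norm v)\<^sup>2"
      using bK[of y "y - s *\<^sub>R v"] by (simp add: power_mult_distrib)
    finally have 1: "0 \<le> b x y + K / 2 * s\<^sup>2 * (norm v)\<^sup>2 - s * (norm v)\<^sup>2" .
    have "0 \<le> b y (x + s *\<^sub>R v)"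
      by (rule b0)
    also have "\<dots> = b y x + b x (x + s *\<^sub>R v) - s * (norm v)\<^sup>2"
      by (subst b_split[of y _ x])
        (simp add: v_def power2_norm_eq_inner inner_diff_left inner_diff_right inner_commute algebra_simps)
    also have "\<dots> \<le> b y x + K / 2 * s\<^sup>2 * (norm v)\<^sup>2 - s * (norm v)\<^sup>2"
      using bK[of x "x + s *\<^sub>R v"] by (simp add: power_mult_distrib)
    finally have 2: "0 \<le> b y x + K / 2 * s\<^sup>2 * (norm v)\<^sup>2 - s * (norm v)\<^sup>2" .
    have "b x y + b y x = v \<bullet> (y - x)"
      unfolding b_def v_def by (simp add: inner_diff_left inner_diff_right inner_commute algebra_simps)
    with 1 2 show ?thesis
      by (simp add: algebra_simps)
  qed
  then have "(norm v)\<^sup>2 \<le> K * (v \<bullet> (y - x))"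
    by (rule le_mult_if_forall_quadratic_le) (simp_all add: K)
  then show ?thesis
    by (simp add: v_def norm_minus_commute inner_diff_left inner_diff_right algebra_simps)
qed

lemma strongly_convex_smooth_interpolation:
  fixes f :: "'a::real_inner \<Rightarrow> real"
  assumes grad: "\<And>z. GDERIV f z :> g z"
    and sc: "strongly_convex_on UNIV \<mu> f"
    and lip: "\<And>x y. norm (g x - g y) \<le> L * norm (x - y)"
    and "\<mu> \<le> L"
  shows "0 \<le> (g x - g y - \<mu> *\<^sub>R (x - y)) \<bullet> (L *\<^sub>R (x - y) - (g x - g y))"
proof -
  define h where "h z = f z - \<mu> / 2 * (norm z)\<^sup>2" for z
  define G where "G z = g z - \<mu> *\<^sub>R z" for z
  have bregman: "h z - h a - G a \<bullet> (z - a) = f z - f a - g a \<bullet> (z - a) - \<mu> / 2 * (norm (z - a))\<^sup>2"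
    for a z
    unfolding h_def G_def
    by (simp add: power2_norm_eq_inner inner_diff_left inner_diff_right inner_commute algebra_simps)
  have lower: "0 \<le> h z - h a - G a \<bullet> (z - a)" for a z
    unfolding bregman using strongly_convex_gradient_lower_bound[OF grad sc, of a z] by simp
  have upper: "h z - h a - G a \<bullet> (z - a) \<le> (L - \<mu>) / 2 * (norm (z - a))\<^sup>2" for a z
    unfolding bregman using gradient_lipschitz_upper_bound[OF grad lip, of z a]
    by (simp only: diff_divide_distrib left_diff_distrib)
  have "(norm (G x - G y))\<^sup>2 \<le> (L - \<mu>) * ((G x - G y) \<bullet> (x - y))"
    using \<open>\<mu> \<le> L\<close> by (intro cocoercive_if_bregman_bounds[OF lower upper]) simp
  moreover have "g x - g y - \<mu> *\<^sub>R (x - y) = G x - G y"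
    and "L *\<^sub>R (x - y) - (g x - g y) = (L - \<mu>) *\<^sub>R (x - y) - (G x - G y)"
    by (simp_all add: G_def algebra_simps)
  ultimately show ?thesis
    by (simp only: inner_diff_right inner_scaleR_right power2_norm_eq_inner)
qed

text \<open>The hypothesis places d in the ball of radius (L - \<mu>)/2 |e| around ((\<mu> + L)/2) e.\<close>
lemma norm_sub_scaleR_sq_le_if_interpolation:
  fixes e d :: "'a::real_inner"
  assumes H: "0 \<le> (d - \<mu> *\<^sub>R e) \<bullet> (L *\<^sub>R e - d)" and gam: "0 < \<gamma>" and muL: "\<mu> \<le> L"
  shows "(norm (e - \<gamma> *\<^sub>R d))\<^sup>2 \<le> max ((1 - \<gamma> * \<mu>)\<^sup>2) ((\<gamma> * L - 1)\<^sup>2) * (norm e)\<^sup>2"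
proof -
  define m where "m = (\<mu> + L) / 2"
  define \<rho> where "\<rho> = (L - \<mu>) / 2"
  define r where "r = d - m *\<^sub>R e"
  have rho0: "0 \<le> \<rho>" using muL by (simp add: \<rho>_def)
  have "d - \<mu> *\<^sub>R e = r + \<rho> *\<^sub>R e" "L *\<^sub>R e - d = \<rho> *\<^sub>R e - r"
    by (simp_all add: r_def m_def \<rho>_def algebra_simps flip: scaleR_add_left)
      (simp_all add: field_simps)
  with H have "r \<bullet> r \<le> \<rho>\<^sup>2 * (e \<bullet> e)"
    by (simp add: inner_add_left inner_diff_right inner_commute algebra_simps power2_eq_square)
  then have "(norm r)\<^sup>2 \<le> (\<rho> * norm e)\<^sup>2"
    by (simp add: power2_norm_eq_inner power_mult_distrib)
  then have nr: "norm r \<le> \<rho> * norm e"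
    using power2_le_imp_le rho0 by simp
  have "e - \<gamma> *\<^sub>R d = (1 - \<gamma> * m) *\<^sub>R e - \<gamma> *\<^sub>R r"
    by (simp add: r_def algebra_simps)
  then have "norm (e - \<gamma> *\<^sub>R d) \<le> \<bar>1 - \<gamma> * m\<bar> * norm e + \<gamma> * norm r"
    using norm_triangle_ineq4[of "(1 - \<gamma> * m) *\<^sub>R e" "\<gamma> *\<^sub>R r"] gam by simp
  also have "\<dots> \<le> (\<bar>1 - \<gamma> * m\<bar> + \<gamma> * \<rho>) * norm e"
    using nr gam by (simp add: algebra_simps mult_left_mono)
  finally have N: "norm (e - \<gamma> *\<^sub>R d) \<le> (\<bar>1 - \<gamma> * m\<bar> + \<gamma> * \<rho>) * norm e" .
  have "\<bar>1 - \<gamma> * m\<bar> + \<gamma> * \<rho> = 1 - \<gamma> * \<mu> \<or> \<bar>1 - \<gamma> * m\<bar> + \<gamma> * \<rho> = \<gamma> * L - 1"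
    by (cases "0 \<le> 1 - \<gamma> * m") (simp_all add: m_def \<rho>_def field_simps)
  then have k: "(\<bar>1 - \<gamma> * m\<bar> + \<gamma> * \<rho>)\<^sup>2 \<le> max ((1 - \<gamma> * \<mu>)\<^sup>2) ((\<gamma> * L - 1)\<^sup>2)"
    by auto
  have "(norm (e - \<gamma> *\<^sub>R d))\<^sup>2 \<le> ((\<bar>1 - \<gamma> * m\<bar> + \<gamma> * \<rho>) * norm e)\<^sup>2"
    by (rule power_mono[OF N]) simp
  also have "\<dots> \<le> max ((1 - \<gamma> * \<mu>)\<^sup>2) ((\<gamma> * L - 1)\<^sup>2) * (norm e)\<^sup>2"
    unfolding power_mult_distrib by (rule mult_right_mono[OF k]) simp
  finally show ?thesis .
qed

lemma gradient_step_contraction: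
  fixes f :: "'a::real_inner \<Rightarrow> real"
  assumes grad: "\<And>z. GDERIV f z :> g z"
    and sc: "strongly_convex_on UNIV \<mu> f"
    and lip: "\<And>x y. norm (g x - g y) \<le> L * norm (x - y)"
    and "\<mu> \<le> L" "0 < \<gamma>"
  shows "(norm ((x - \<gamma> *\<^sub>R g x) - (y - \<gamma> *\<^sub>R g y)))\<^sup>2
    \<le> max ((1 - \<gamma> * \<mu>)\<^sup>2) ((\<gamma> * L - 1)\<^sup>2) * (norm (x - y))\<^sup>2"
proof -
  have "(x - \<gamma> *\<^sub>R g x) - (y - \<gamma> *\<^sub>R g y) = (x - y) - \<gamma> *\<^sub>R (g x - g y)"
    by (simp add: algebra_simps)
  then show ?thesis
    using norm_sub_scaleR_sq_le_if_interpolation[OF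
        strongly_convex_smooth_interpolation[OF assms(1-4), of x y] assms(5,4)]
    by (simp only:)
qed

lemma contraction_factor_lt_1:
  fixes \<mu> L \<gamma> \<omega> :: real
  assumes "0 < \<mu>" "\<mu> \<le> L" "0 < \<gamma>" "\<gamma> < 2 / L" "0 \<le> \<omega>"
  shows "max ((1 - \<gamma> * \<mu>)\<^sup>2) (max ((\<gamma> * L - 1)\<^sup>2) (1 - 1 / (1 + \<omega>)\<^sup>2)) < 1"
proof -
  have "\<gamma> * L < 2"
    using assms by (simp add: field_simps)
  moreover have "0 < \<gamma> * \<mu>" "\<gamma> * \<mu> \<le> \<gamma> * L"
    using assms by simp_all
  ultimately have "\<bar>1 - \<gamma> * \<mu>\<bar> < 1" "\<bar>\<gamma> * L - 1\<bar> < 1"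
    by auto
  with \<open>0 \<le> \<omega>\<close> show ?thesis
    by (simp add: abs_square_less_1)
qed

lemma sum_gradients_eq_0_if_minimum:
  fixes f :: "'i \<Rightarrow> 'a::real_inner \<Rightarrow> real"
  assumes grad: "\<And>i. i \<in> I \<Longrightarrow> GDERIV (f i) x :> g i x"
    and min: "\<And>y. (\<Sum>i\<in>I. f i x) \<le> (\<Sum>i\<in>I. f i y)"
  shows "(\<Sum>i\<in>I. g i x) = 0"
proof -
  have "((\<lambda>y. \<Sum>i\<in>I. f i y) has_derivative (\<lambda>h. \<Sum>i\<in>I. h \<bullet> g i x)) (at x)"
    using grad by (intro has_derivative_sum) (simp add: gderiv_def)
  then have "(\<lambda>h. \<Sum>i\<in>I. h \<bullet> g i x) = (\<lambda>h. 0)"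
    by (rule has_derivative_local_min) (simp add: min)
  then have "(\<Sum>i\<in>I. g i x) \<bullet> (\<Sum>i\<in>I. g i x) = 0"
    by (metis inner_sum_right)
  then show ?thesis
    by simp
qed

section \<open>Algebra of one iteration\<close>

definition centered :: "nat \<Rightarrow> (nat \<Rightarrow> 'a::real_vector) \<Rightarrow> nat \<Rightarrow> 'a" where
  "centered n a i = a i - (1 / real n) *\<^sub>R (\<Sum>j<n. a j)"

lemma sum_centered: "1 \<le> n \<Longrightarrow> (\<Sum>i<n. centered n a i) = 0"
  unfolding centered_def sum_subtractf sum_constant_scaleR card_lessThan by simp

lemma centered_diff_const: "1 \<le> n \<Longrightarrow> centered n (\<lambda>j. a j - c) i = centered n a i"
  unfolding centered_def sum_subtractf sum_constant_scaleR card_lessThan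
  by (simp add: scaleR_diff_right)

lemma linear_centered: "linear h \<Longrightarrow> h (centered n a i) = centered n (\<lambda>j. h (a j)) i"
  by (simp add: centered_def linear_diff linear_scale linear_sum)

lemma sum_inner_centered:
  fixes a b :: "nat \<Rightarrow> 'a::real_inner"
  assumes "(\<Sum>i<n. b i) = 0"
  shows "(\<Sum>i<n. b i \<bullet> centered n a i) = (\<Sum>i<n. b i \<bullet> a i)"
  unfolding centered_def inner_diff_right sum_subtractf inner_sum_left[symmetric] assms by simp

lemma sum_inner_centered_self:
  fixes a :: "nat \<Rightarrow> 'a::real_inner"
  assumes "1 \<le> n"
  shows "(\<Sum>i<n. a i \<bullet> centered n a i) = (\<Sum>i<n. (norm (centered n a i))\<^sup>2)"
  using sum_inner_centered[OF sum_centered[OF assms], of a a]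
  by (simp add: power2_norm_eq_inner inner_commute)

lemma lyapunov_update_expansion:
  fixes A B D :: "'a::real_inner" and \<gamma> a :: real
  assumes "0 < \<gamma>" "0 < a"
  shows "(1 / \<gamma>) * (norm (A - (1 / a) *\<^sub>R D))\<^sup>2 + \<gamma> * a\<^sup>2 * (norm (B + (1 / (\<gamma> * a\<^sup>2)) *\<^sub>R D))\<^sup>2
    = (1 / \<gamma>) * (norm A)\<^sup>2 + \<gamma> * a\<^sup>2 * (norm B)\<^sup>2 + 2 * ((B - (1 / (a * \<gamma>)) *\<^sub>R A) \<bullet> D)
      + 2 / (\<gamma> * a\<^sup>2) * (norm D)\<^sup>2"
proof -
  define p q where "p = 1 / a" and "q = 1 / (\<gamma> * a\<^sup>2)"
  have e: "(norm (A - p *\<^sub>R D))\<^sup>2 = (norm A)\<^sup>2 - 2 * p * (A \<bullet> D) + p\<^sup>2 * (norm D)\<^sup>2"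
    and f: "(norm (B + q *\<^sub>R D))\<^sup>2 = (norm B)\<^sup>2 + 2 * q * (B \<bullet> D) + q\<^sup>2 * (norm D)\<^sup>2"
    by (simp_all add: power2_norm_eq_inner inner_diff_left inner_diff_right inner_add_left
        inner_add_right inner_commute algebra_simps) (simp_all add: power2_eq_square)
  have "\<gamma> * a\<^sup>2 * q = 1" "p\<^sup>2 / \<gamma> + \<gamma> * a\<^sup>2 * q\<^sup>2 = 2 / (\<gamma> * a\<^sup>2)" "p / \<gamma> = 1 / (a * \<gamma>)"
    using assms by (simp_all add: p_def q_def field_simps power2_eq_square)
  moreover have "(1 / \<gamma>) * (norm (A - p *\<^sub>R D))\<^sup>2 + \<gamma> * a\<^sup>2 * (norm (B + q *\<^sub>R D))\<^sup>2
    = (1 / \<gamma>) * (norm A)\<^sup>2 + \<gamma> * a\<^sup>2 * (norm B)\<^sup>2 + 2 * (((\<gamma> * a\<^sup>2 * q) *\<^sub>R B - (p / \<gamma>) *\<^sub>R A) \<bullet> D)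
      + (p\<^sup>2 / \<gamma> + \<gamma> * a\<^sup>2 * q\<^sup>2) * (norm D)\<^sup>2"
    unfolding e f by (simp add: inner_diff_left algebra_simps)
  ultimately show ?thesis
    by (simp add: p_def q_def)
qed

section \<open>Square-integrable random vectors\<close>

definition square_integrable :: "'w measure \<Rightarrow> ('w \<Rightarrow> 'a::real_normed_vector) \<Rightarrow> bool" where
  "square_integrable M f \<longleftrightarrow> f \<in> borel_measurable M \<and> integrable M (\<lambda>w. (norm (f w))\<^sup>2)"

lemma square_integrable_if_le:
  assumes "f \<in> borel_measurable M" "integrable M h" "\<And>w. w \<in> space M \<Longrightarrow> (norm (f w))\<^sup>2 \<le> h w"
  shows "square_integrable M f"
  unfolding square_integrable_def
proof
  show "integrable M (\<lambda>w. (norm (f w))\<^sup>2)"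
  proof (rule Bochner_Integration.integrable_bound[OF assms(2)])
    show "(\<lambda>w. (norm (f w))\<^sup>2) \<in> borel_measurable M"
      using assms(1) by measurable
    show "AE w in M. norm ((norm (f w))\<^sup>2) \<le> norm (h w)"
      using assms(3) by (intro AE_I2) force
  qed
qed fact

lemma square_integrable_cong:
  "(\<And>w. w \<in> space M \<Longrightarrow> f w = f' w) \<Longrightarrow> square_integrable M f \<Longrightarrow> square_integrable M f'"
  unfolding square_integrable_def
  by (metis (no_types, lifting) Bochner_Integration.integrable_cong measurable_cong)

lemma square_integrable_const: "finite_measure M \<Longrightarrow> square_integrable M (\<lambda>w. c)"
  by (simp add: square_integrable_def finite_measure.integrable_const)

lemma square_integrable_add:
  fixes f g :: "'w \<Rightarrow> 'a::euclidean_space"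
  assumes "square_integrable M f" "square_integrable M g"
  shows "square_integrable M (\<lambda>w. f w + g w)"
proof (rule square_integrable_if_le)
  show "(\<lambda>w. f w + g w) \<in> borel_measurable M"
    using assms by (auto simp: square_integrable_def)
  show "integrable M (\<lambda>w. 2 * (norm (f w))\<^sup>2 + 2 * (norm (g w))\<^sup>2)"
    using assms by (simp add: square_integrable_def)
  show "(norm (f w + g w))\<^sup>2 \<le> 2 * (norm (f w))\<^sup>2 + 2 * (norm (g w))\<^sup>2" for w
  proof -
    have "(norm (f w + g w))\<^sup>2 \<le> (norm (f w) + norm (g w))\<^sup>2"
      by (rule power_mono[OF norm_triangle_ineq]) simp
    also have "\<dots> \<le> 2 * (norm (f w))\<^sup>2 + 2 * (norm (g w))\<^sup>2"
      using sum_squares_bound[of "norm (f w)" "norm (g w)"] by (simp add: power2_sum)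
    finally show ?thesis .
  qed
qed

lemma square_integrable_bounded_linear:
  fixes f :: "'w \<Rightarrow> 'a::euclidean_space" and h :: "'a \<Rightarrow> 'b::euclidean_space"
  assumes "bounded_linear h" "square_integrable M f"
  shows "square_integrable M (\<lambda>w. h (f w))"
proof -
  interpret h: bounded_linear h by fact
  obtain K where K: "\<And>x. norm (h x) \<le> norm x * K"
    using h.bounded by blast
  show ?thesis
  proof (rule square_integrable_if_le)
    show "(\<lambda>w. h (f w)) \<in> borel_measurable M"
      using assms by (simp add: square_integrable_def borel_measurable_continuous_on
          linear_continuous_on)
    show "integrable M (\<lambda>w. K\<^sup>2 * (norm (f w))\<^sup>2)"
      using assms by (simp add: square_integrable_def)
    show "(norm (h (f w)))\<^sup>2 \<le> K\<^sup>2 * (norm (f w))\<^sup>2" for w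
      using power_mono[OF K[of "f w"] norm_ge_zero, of 2]
      by (simp add: power_mult_distrib mult.commute)
  qed
qed

lemma square_integrable_scaleR:
  fixes f :: "'w \<Rightarrow> 'a::euclidean_space"
  shows "square_integrable M f \<Longrightarrow> square_integrable M (\<lambda>w. c *\<^sub>R f w)"
  by (rule square_integrable_bounded_linear[OF bounded_linear_scaleR_right])

lemma square_integrable_inner_left:
  fixes f :: "'w \<Rightarrow> 'a::euclidean_space"
  shows "square_integrable M f \<Longrightarrow> square_integrable M (\<lambda>w. f w \<bullet> c)"
  by (rule square_integrable_bounded_linear[OF bounded_linear_inner_left])

lemma square_integrable_diff:
  fixes f g :: "'w \<Rightarrow> 'a::euclidean_space"
  shows "square_integrable M f \<Longrightarrow> square_integrable M g \<Longrightarrow> square_integrable M (\<lambda>w. f w - g w)"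
  using square_integrable_add[of M f "\<lambda>w. (-1) *\<^sub>R g w"] square_integrable_scaleR[of M g "-1"]
  by simp

lemma square_integrable_sum:
  fixes f :: "'i \<Rightarrow> 'w \<Rightarrow> 'a::euclidean_space"
  assumes "finite_measure M" "\<And>i. i \<in> I \<Longrightarrow> square_integrable M (f i)"
  shows "square_integrable M (\<lambda>w. \<Sum>i\<in>I. f i w)"
  using assms(2)
  by (induction I rule: infinite_finite_induct)
    (simp_all add: square_integrable_const[OF assms(1)] square_integrable_add)

lemma square_integrable_affinely_bounded:
  fixes f :: "'w \<Rightarrow> 'a::euclidean_space" and h :: "'a \<Rightarrow> 'b::euclidean_space"
  assumes "finite_measure M" "square_integrable M f" "continuous_on UNIV h"
    and bound: "\<And>x. norm (h x) \<le> a + b * norm x"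
  shows "square_integrable M (\<lambda>w. h (f w))"
proof (rule square_integrable_if_le)
  show "(\<lambda>w. h (f w)) \<in> borel_measurable M"
    using assms(2,3) by (simp add: square_integrable_def borel_measurable_continuous_on)
  show "integrable M (\<lambda>w. 2 * a\<^sup>2 + 2 * b\<^sup>2 * (norm (f w))\<^sup>2)"
    using assms(1,2) by (simp add: square_integrable_def finite_measure.integrable_const)
  show "(norm (h (f w)))\<^sup>2 \<le> 2 * a\<^sup>2 + 2 * b\<^sup>2 * (norm (f w))\<^sup>2" for w
  proof -
    have "(norm (h (f w)))\<^sup>2 \<le> (a + b * norm (f w))\<^sup>2"
      by (rule power_mono[OF bound]) simp
    also have "\<dots> \<le> 2 * a\<^sup>2 + 2 * b\<^sup>2 * (norm (f w))\<^sup>2"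
      using sum_squares_bound[of a "b * norm (f w)"] by (simp add: power2_sum power_mult_distrib)
    finally show ?thesis .
  qed
qed

lemma integrable_inner_if_square_integrable:
  fixes f g :: "'w \<Rightarrow> 'a::euclidean_space"
  assumes "square_integrable M f" "square_integrable M g"
  shows "integrable M (\<lambda>w. f w \<bullet> g w)"
proof (rule Bochner_Integration.integrable_bound)
  show "integrable M (\<lambda>w. (norm (f w))\<^sup>2 + (norm (g w))\<^sup>2)"
    using assms by (simp add: square_integrable_def)
  show "(\<lambda>w. f w \<bullet> g w) \<in> borel_measurable M"
    using assms by (auto simp: square_integrable_def)
  have "\<bar>f w \<bullet> g w\<bar> \<le> (norm (f w))\<^sup>2 + (norm (g w))\<^sup>2" for w
  proof -
    have "\<bar>f w \<bullet> g w\<bar> \<le> norm (f w) * norm (g w)"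
      by (rule Cauchy_Schwarz_ineq2)
    also have "\<dots> \<le> (norm (f w))\<^sup>2 + (norm (g w))\<^sup>2"
      using sum_squares_bound[of "norm (f w)" "norm (g w)"]
        mult_nonneg_nonneg[OF norm_ge_zero norm_ge_zero, of "f w" "g w"]
      by (simp only: mult.assoc)
    finally show ?thesis .
  qed
  then show "AE w in M. norm (f w \<bullet> g w) \<le> norm ((norm (f w))\<^sup>2 + (norm (g w))\<^sup>2)"
    by (intro AE_I2) force
qed

lemma integral_add_sum:
  fixes P :: "'w \<Rightarrow> real"
  assumes "integrable M P" "\<And>i. i \<in> I \<Longrightarrow> integrable M (G i)"
  shows "(\<integral>w. P w + (\<Sum>i\<in>I. G i w) \<partial>M) = (\<integral>w. P w \<partial>M) + (\<Sum>i\<in>I. \<integral>w. G i w \<partial>M)"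
proof -
  have "integrable M (\<lambda>w. \<Sum>i\<in>I. G i w)"
    using assms(2) by (rule Bochner_Integration.integrable_sum)
  with assms(1) have "(\<integral>w. P w + (\<Sum>i\<in>I. G i w) \<partial>M) = (\<integral>w. P w \<partial>M) + (\<integral>w. (\<Sum>i\<in>I. G i w) \<partial>M)"
    by (rule Bochner_Integration.integral_add)
  also have "\<dots> = (\<integral>w. P w \<partial>M) + (\<Sum>i\<in>I. \<integral>w. G i w \<partial>M)"
    using assms(2) by (subst Bochner_Integration.integral_sum) auto
  finally show ?thesis .
qed

lemma square_integrable_centered:
  fixes a :: "'w \<Rightarrow> nat \<Rightarrow> 'a::euclidean_space"
  assumes "finite_measure M" "\<And>j. j < n \<Longrightarrow> square_integrable M (\<lambda>w. a w j)" "i < n"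
  shows "square_integrable M (\<lambda>w. centered n (a w) i)"
  unfolding centered_def using assms
  by (intro square_integrable_diff square_integrable_scaleR square_integrable_sum) auto

context sigma_finite_subalgebra
begin

lemma integral_inner_eq_if_cond_exp_eq:
  fixes V Z Y :: "'a \<Rightarrow> 'd::euclidean_space"
  assumes V: "V \<in> borel_measurable F" "square_integrable M V"
    and Z: "square_integrable M Z" and Y: "square_integrable M Y"
    and cond: "AE w in M. \<forall>b\<in>Basis. real_cond_exp M F (\<lambda>w'. Z w' \<bullet> b) w = Y w \<bullet> b"
  shows "(\<integral>w. V w \<bullet> Z w \<partial>M) = (\<integral>w. V w \<bullet> Y w \<partial>M)"
proof -
  have [measurable]: "V \<in> borel_measurable F" "V \<in> borel_measurable M"
    "Z \<in> borel_measurable M" "Y \<in> borel_measurable M"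
    using V Z Y measurable_from_subalg[OF subalg V(1)] by (simp_all add: square_integrable_def)
  have int: "integrable M (\<lambda>w. (V w \<bullet> b) * (W w \<bullet> b))" if "square_integrable M W" for W and b :: 'd
    using integrable_inner_if_square_integrable[OF square_integrable_inner_left[OF V(2)]
        square_integrable_inner_left[OF that]]
    by simp
  have coord: "(\<integral>w. (V w \<bullet> b) * (Z w \<bullet> b) \<partial>M) = (\<integral>w. (V w \<bullet> b) * (Y w \<bullet> b) \<partial>M)"
    if "b \<in> Basis" for b
  proof -
    have "(\<integral>w. (V w \<bullet> b) * (Z w \<bullet> b) \<partial>M)
        = (\<integral>w. (V w \<bullet> b) * real_cond_exp M F (\<lambda>w'. Z w' \<bullet> b) w \<partial>M)"
      by (rule real_cond_exp_intg(2)[OF int[OF Z], symmetric]) measurable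
    also have "\<dots> = (\<integral>w. (V w \<bullet> b) * (Y w \<bullet> b) \<partial>M)"
      using cond that by (intro integral_cong_AE) (measurable, auto elim!: eventually_mono)
    finally show ?thesis .
  qed
  have "(\<integral>w. V w \<bullet> Z w \<partial>M) = (\<Sum>b\<in>Basis. \<integral>w. (V w \<bullet> b) * (Z w \<bullet> b) \<partial>M)"
    by (subst euclidean_inner) (intro Bochner_Integration.integral_sum int Z)
  also have "\<dots> = (\<Sum>b\<in>Basis. \<integral>w. (V w \<bullet> b) * (Y w \<bullet> b) \<partial>M)"
    using coord by simp
  also have "\<dots> = (\<integral>w. V w \<bullet> Y w \<partial>M)"
    by (subst (2) euclidean_inner) (intro Bochner_Integration.integral_sum[symmetric] int Y)
  finally show ?thesis .
qed

lemma integral_le_if_nn_cond_exp_le: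
  assumes [measurable]: "E \<in> borel_measurable M" and E: "\<And>w. 0 \<le> E w"
    and h: "integrable M h" "\<And>w. 0 \<le> h w"
    and le: "AE w in M. nn_cond_exp M F (\<lambda>w. ennreal (E w)) w \<le> ennreal (h w)"
  shows "integrable M E" and "(\<integral>w. E w \<partial>M) \<le> (\<integral>w. h w \<partial>M)"
proof -
  have "(\<integral>\<^sup>+w. ennreal (E w) \<partial>M) = (\<integral>\<^sup>+w. nn_cond_exp M F (\<lambda>w. ennreal (E w)) w \<partial>M)"
    using nn_cond_exp_intg[of "\<lambda>_. 1" "\<lambda>w. ennreal (E w)"] by simp
  also have "\<dots> \<le> (\<integral>\<^sup>+w. ennreal (h w) \<partial>M)"
    using le by (rule nn_integral_mono_AE)
  also have "\<dots> = ennreal (\<integral>w. h w \<partial>M)"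
    using h by (intro nn_integral_eq_integral) auto
  finally have le_int: "(\<integral>\<^sup>+w. ennreal (E w) \<partial>M) \<le> ennreal (\<integral>w. h w \<partial>M)" .
  then show int: "integrable M E"
    using E by (intro integrableI_nonneg) (auto intro: le_less_trans)
  have "ennreal (\<integral>w. E w \<partial>M) \<le> ennreal (\<integral>w. h w \<partial>M)"
    using le_int nn_integral_eq_integral[OF int] E by simp
  then show "(\<integral>w. E w \<partial>M) \<le> (\<integral>w. h w \<partial>M)"
    using h by (simp add: ennreal_le_iff Bochner_Integration.integral_nonneg)
qed

end

lemma borel_measurable_linear_apply:
  fixes R :: "'w \<Rightarrow> 'a::euclidean_space \<Rightarrow> 'b::euclidean_space"
  assumes lin: "\<And>w. w \<in> space M \<Longrightarrow> linear (R w)"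
    and "\<And>v. (\<lambda>w. R w v) \<in> borel_measurable M" "h \<in> borel_measurable M"
  shows "(\<lambda>w. R w (h w)) \<in> borel_measurable M"
proof -
  have "R w (h w) = (\<Sum>b\<in>Basis. (h w \<bullet> b) *\<^sub>R R w b)" if "w \<in> space M" for w
  proof -
    have "R w (h w) = R w (\<Sum>b\<in>Basis. (h w \<bullet> b) *\<^sub>R b)"
      by (simp add: euclidean_representation)
    also have "\<dots> = (\<Sum>b\<in>Basis. (h w \<bullet> b) *\<^sub>R R w b)"
      using lin[OF that] by (simp add: linear_sum linear_scale)
    finally show ?thesis .
  qed
  moreover have "(\<lambda>w. \<Sum>b\<in>Basis. (h w \<bullet> b) *\<^sub>R R w b) \<in> borel_measurable M"
    using assms(2,3) by measurable
  ultimately show ?thesis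
    by (subst measurable_cong[where g = "\<lambda>w. \<Sum>b\<in>Basis. (h w \<bullet> b) *\<^sub>R R w b"]) auto
qed

lemma subalgebra_sigma:
  assumes "G \<subseteq> sets M"
  shows "subalgebra M (sigma (space M) G)"
proof -
  have "G \<subseteq> Pow (space M)"
    using assms sets.sets_into_space by blast
  with assms show ?thesis
    by (simp add: subalgebra_def space_measure_of_conv sets_measure_of sets.sigma_sets_subset)
qed

lemma measurable_sigma_if_preimages:
  assumes "G \<subseteq> Pow \<Omega>" "f \<in> \<Omega> \<rightarrow> space N" "\<And>B. B \<in> sets N \<Longrightarrow> f -` B \<inter> \<Omega> \<in> G"
  shows "f \<in> measurable (sigma \<Omega> G) N"
  using assms by (intro measurableI) (auto simp: space_measure_of_conv sets_measure_of)

lemma AE_tendsto_0_if_summable_nn_integral: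
  fixes Z :: "nat \<Rightarrow> 'w \<Rightarrow> real"
  assumes [measurable]: "\<And>t. Z t \<in> borel_measurable M" and Z: "\<And>t w. 0 \<le> Z t w"
    and le: "\<And>t. (\<integral>\<^sup>+w. ennreal (Z t w) \<partial>M) \<le> ennreal (b t)"
    and b: "summable b" "\<And>t. 0 \<le> b t"
  shows "AE w in M. (\<lambda>t. Z t w) \<longlonglongrightarrow> 0"
proof -
  have "(\<integral>\<^sup>+w. (\<Sum>t. ennreal (Z t w)) \<partial>M) = (\<Sum>t. \<integral>\<^sup>+w. ennreal (Z t w) \<partial>M)"
    by (rule nn_integral_suminf) measurable
  also have "\<dots> \<le> (\<Sum>t. ennreal (b t))"
    by (intro suminf_le le) auto
  also have "\<dots> = ennreal (\<Sum>t. b t)"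
    using b by (intro suminf_ennreal2)
  finally have "(\<integral>\<^sup>+w. (\<Sum>t. ennreal (Z t w)) \<partial>M) \<noteq> \<infinity>"
    by (auto simp: top_unique)
  then have "AE w in M. (\<Sum>t. ennreal (Z t w)) \<noteq> \<infinity>"
    by (intro nn_integral_PInf_AE) measurable
  then show ?thesis
  proof (rule eventually_mono)
    fix w
    assume "(\<Sum>t. ennreal (Z t w)) \<noteq> \<infinity>"
    then have "summable (\<lambda>t. Z t w)"
      using Z by (intro summable_suminf_not_top) auto
    then show "(\<lambda>t. Z t w) \<longlonglongrightarrow> 0"
      by (rule summable_LIMSEQ_zero)
  qed
qed

lemma tendsto_if_weighted_norm_sq_le:
  fixes x :: "nat \<Rightarrow> 'a::real_normed_vector"
  assumes Z: "Z \<longlonglongrightarrow> 0" and k: "0 < k" and le: "\<And>t. k * (norm (x t - l))\<^sup>2 \<le> Z t"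
  shows "x \<longlonglongrightarrow> l"
proof -
  have bound: "norm (x t - l) \<le> sqrt (Z t / k)" for t
    using le[of t] k by (simp add: real_le_rsqrt field_simps)
  have "(\<lambda>t. sqrt (Z t / k)) \<longlonglongrightarrow> 0"
    using tendsto_real_sqrt[OF tendsto_divide[OF Z tendsto_const, of k]] k by simp
  then have "(\<lambda>t. x t - l) \<longlonglongrightarrow> 0"
    by (rule Lim_null_comparison[rotated]) (use bound in auto)
  then show ?thesis
    by (rule LIM_zero_cancel)
qed

section \<open>The iterates of RandProx-FL\<close>

locale randprox_fl =
  fixes M :: "'w measure"
    and n :: nat
    and f :: "nat \<Rightarrow> 'd::euclidean_space \<Rightarrow> real"
    and g :: "nat \<Rightarrow> 'd \<Rightarrow> 'd"
    and \<mu> L \<gamma> \<omega> :: real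
    and R :: "nat \<Rightarrow> 'w \<Rightarrow> 'd \<Rightarrow> 'd"
    and x0 u0 :: "nat \<Rightarrow> 'd"
    and xstar :: 'd
  assumes prob: "prob_space M"
    and n_pos: "n \<ge> 1"
    and mu_pos: "0 < \<mu>" and mu_le_L: "\<mu> \<le> L"
    and grad: "\<And>i x. i < n \<Longrightarrow> GDERIV (f i) x :> g i x"
    and sconvex: "\<And>i. i < n \<Longrightarrow> strongly_convex_on UNIV \<mu> (f i)"
    and smooth: "\<And>i x y. i < n \<Longrightarrow> norm (g i x - g i y) \<le> L * norm (x - y)"
    and gamma_pos: "0 < \<gamma>" and gamma_lt: "\<gamma> < 2 / L"
    and omega_nonneg: "0 \<le> \<omega>"
    and u0_sum: "(\<Sum>i<n. u0 i) = 0"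
    and R_linear: "\<And>t w. w \<in> space M \<Longrightarrow> linear (R t w)"
    and R_meas: "\<And>t v. (\<lambda>w. R t w v) \<in> borel_measurable M"
    and R_unbiased: "\<And>t y. y \<in> borel_measurable (rpfl_filt M n g \<gamma> \<omega> R x0 u0 t)
        \<Longrightarrow> integrable M (\<lambda>w. (norm (y w))\<^sup>2)
        \<Longrightarrow> AE w in M. \<forall>b\<in>Basis.
              real_cond_exp M (rpfl_filt M n g \<gamma> \<omega> R x0 u0 t) (\<lambda>w'. R t w' (y w') \<bullet> b) w = y w \<bullet> b"
    and R_variance: "\<And>t y. y \<in> borel_measurable (rpfl_filt M n g \<gamma> \<omega> R x0 u0 t)
        \<Longrightarrow> AE w in M.
              nn_cond_exp M (rpfl_filt M n g \<gamma> \<omega> R x0 u0 t) (\<lambda>w'. ennreal ((norm (R t w' (y w') - y w'))\<^sup>2)) w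
                \<le> ennreal (\<omega> * (norm (y w))\<^sup>2)"
    and xstar_min: "\<And>y. (\<Sum>i<n. f i xstar) \<le> (\<Sum>i<n. f i y)"
begin

definition "X t w = fst (rpfl n g \<gamma> \<omega> R x0 u0 t w)"
definition "U t w = snd (rpfl n g \<gamma> \<omega> R x0 u0 t w)"
definition "Xh t w = rpfl_xhat g \<gamma> (rpfl n g \<gamma> \<omega> R x0 u0 t w)"
definition "Y t w = centered n (Xh t w)"
definition "F t = rpfl_filt M n g \<gamma> \<omega> R x0 u0 t"
definition "ustar i = - g i xstar"

lemma Xh_eq: "Xh t w i = X t w i - \<gamma> *\<^sub>R g i (X t w i) - \<gamma> *\<^sub>R U t w i"
  by (simp add: Xh_def X_def U_def rpfl_xhat_def)

lemma X_0: "X 0 w = x0" and U_0: "U 0 w = u0"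
  by (simp_all add: X_def U_def)

lemma X_Suc: "X (Suc t) w i = Xh t w i - (1 / (1 + \<omega>)) *\<^sub>R centered n (\<lambda>j. R t w (Xh t w j)) i"
  and U_Suc: "U (Suc t) w i
    = U t w i + (1 / (\<gamma> * (1 + \<omega>)\<^sup>2)) *\<^sub>R centered n (\<lambda>j. R t w (Xh t w j)) i"
  by (simp_all add: X_def U_def Xh_def rpfl_step_def centered_def Let_def)

lemma centered_R_Xh: "w \<in> space M \<Longrightarrow> centered n (\<lambda>j. R t w (Xh t w j)) i = R t w (Y t w i)"
  by (simp add: Y_def linear_centered[OF R_linear])

lemma sum_U: "(\<Sum>i<n. U t w i) = 0"
  by (induction t)
    (simp_all add: U_0 u0_sum U_Suc sum.distrib sum_centered[OF n_pos] flip: scaleR_sum_right)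

lemma sum_ustar: "(\<Sum>i<n. ustar i) = 0"
  using sum_gradients_eq_0_if_minimum[of "{..<n}" f xstar g] grad xstar_min
  by (simp add: ustar_def sum_negf)

lemma finite_measure_M: "finite_measure M"
  using prob by (simp add: prob_space_def)

lemma g_continuous: "i < n \<Longrightarrow> continuous_on UNIV (g i)"
  using smooth mu_pos mu_le_L
  by (intro lipschitz_on_continuous_on[where L = L]) (auto simp: lipschitz_on_def dist_norm)

lemma g_affine_bound: "i < n \<Longrightarrow> norm (g i x) \<le> norm (g i 0) + L * norm x"
  using smooth[of i x 0] norm_triangle_ineq2[of "g i x" "g i 0"] by simp

lemma borel_measurable_R: "h \<in> borel_measurable M \<Longrightarrow> (\<lambda>w. R t w (h w)) \<in> borel_measurable M"
  by (rule borel_measurable_linear_apply[OF R_linear R_meas])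

lemma borel_measurable_X_U:
  "i < n \<Longrightarrow> (\<lambda>w. X t w i) \<in> borel_measurable M \<and> (\<lambda>w. U t w i) \<in> borel_measurable M"
proof (induction t arbitrary: i)
  case 0
  then show ?case by (simp add: X_0 U_0)
next
  case (Suc t)
  have Xh: "(\<lambda>w. Xh t w j) \<in> borel_measurable M" if "j < n" for j
    using Suc.IH[OF that] unfolding Xh_eq
    by (auto intro!: borel_measurable_diff borel_measurable_scaleR
        borel_measurable_continuous_on[OF g_continuous[OF that]])
  then have "(\<lambda>w. centered n (\<lambda>j. R t w (Xh t w j)) i) \<in> borel_measurable M"
    using Suc.prems unfolding centered_def
    by (auto intro!: borel_measurable_diff borel_measurable_scaleR borel_measurable_sum
        borel_measurable_R)
  with Suc Xh[OF Suc.prems] show ?case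
    unfolding X_Suc U_Suc by (auto intro!: borel_measurable_diff borel_measurable_add borel_measurable_scaleR)
qed

lemma F_eq: "F t = sigma (space M)
    ({(\<lambda>w. X s w i) -` B \<inter> space M | s i B. s \<le> t \<and> i < n \<and> B \<in> sets borel}
      \<union> {(\<lambda>w. U s w i) -` B \<inter> space M | s i B. s \<le> t \<and> i < n \<and> B \<in> sets borel})"
  unfolding F_def rpfl_filt_def X_def U_def ..

lemma subalgebra_F: "subalgebra M (F t)"
  unfolding F_eq using borel_measurable_X_U
  by (intro subalgebra_sigma) (auto intro: measurable_sets)

lemma sigma_finite_subalgebra_F: "sigma_finite_subalgebra M (F t)"
  using finite_measure_M subalgebra_F
  by (intro finite_measure_subalgebra_is_sigma_finite finite_measure_subalgebra.intro)
    (simp_all add: finite_measure_subalgebra_axioms_def)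

lemma measurable_F_imp_M: "h \<in> borel_measurable (F t) \<Longrightarrow> h \<in> borel_measurable M"
  by (rule measurable_from_subalg[OF subalgebra_F])

lemma X_measurable_F: "s \<le> t \<Longrightarrow> i < n \<Longrightarrow> (\<lambda>w. X s w i) \<in> borel_measurable (F t)"
  unfolding F_eq by (intro measurable_sigma_if_preimages) (blast, simp, blast)

lemma U_measurable_F: "s \<le> t \<Longrightarrow> i < n \<Longrightarrow> (\<lambda>w. U s w i) \<in> borel_measurable (F t)"
  unfolding F_eq by (intro measurable_sigma_if_preimages) (blast, simp, blast)

lemma Xh_measurable_F: "i < n \<Longrightarrow> (\<lambda>w. Xh t w i) \<in> borel_measurable (F t)"
  unfolding Xh_eq using X_measurable_F[of t t i] U_measurable_F[of t t i]
  by (auto intro!: borel_measurable_diff borel_measurable_scaleR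
      borel_measurable_continuous_on[OF g_continuous])

lemma Y_measurable_F: "i < n \<Longrightarrow> (\<lambda>w. Y t w i) \<in> borel_measurable (F t)"
  unfolding Y_def centered_def using Xh_measurable_F
  by (auto intro!: borel_measurable_diff borel_measurable_scaleR borel_measurable_sum)

lemma integral_norm_sq_R_diff_le:
  assumes y: "y \<in> borel_measurable (F t)" "square_integrable M y"
  shows "integrable M (\<lambda>w. (norm (R t w (y w) - y w))\<^sup>2)"
    and "(\<integral>w. (norm (R t w (y w) - y w))\<^sup>2 \<partial>M) \<le> \<omega> * (\<integral>w. (norm (y w))\<^sup>2 \<partial>M)"
proof -
  interpret sigma_finite_subalgebra M "F t"
    by (rule sigma_finite_subalgebra_F)
  have [measurable]: "y \<in> borel_measurable M"
    using y(1) by (rule measurable_F_imp_M)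
  then have [measurable]: "(\<lambda>w. R t w (y w)) \<in> borel_measurable M"
    by (rule borel_measurable_R)
  have "(\<lambda>w. (norm (R t w (y w) - y w))\<^sup>2) \<in> borel_measurable M"
    by measurable
  note le = integral_le_if_nn_cond_exp_le[OF this _ _ _ R_variance[OF y(1)[unfolded F_def], folded F_def]]
  from y(2) le show "integrable M (\<lambda>w. (norm (R t w (y w) - y w))\<^sup>2)"
    using omega_nonneg by (auto simp: square_integrable_def)
  from y(2) le show "(\<integral>w. (norm (R t w (y w) - y w))\<^sup>2 \<partial>M) \<le> \<omega> * (\<integral>w. (norm (y w))\<^sup>2 \<partial>M)"
    using omega_nonneg by (auto simp: square_integrable_def)
qed

lemma square_integrable_R:
  assumes "y \<in> borel_measurable (F t)" "square_integrable M y"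
  shows "square_integrable M (\<lambda>w. R t w (y w))"
proof -
  have "square_integrable M (\<lambda>w. R t w (y w) - y w)"
    using integral_norm_sq_R_diff_le(1)[OF assms] measurable_F_imp_M[OF assms(1)]
    by (auto simp: square_integrable_def intro!: borel_measurable_R borel_measurable_diff)
  from square_integrable_add[OF this assms(2)] show ?thesis
    by simp
qed

lemma integral_inner_R:
  assumes "y \<in> borel_measurable (F t)" "square_integrable M y"
    and "V \<in> borel_measurable (F t)" "square_integrable M V"
  shows "(\<integral>w. V w \<bullet> R t w (y w) \<partial>M) = (\<integral>w. V w \<bullet> y w \<partial>M)"
proof -
  interpret sigma_finite_subalgebra M "F t"
    by (rule sigma_finite_subalgebra_F)
  have "AE w in M. \<forall>b\<in>Basis. real_cond_exp M (F t) (\<lambda>w'. R t w' (y w') \<bullet> b) w = y w \<bullet> b"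
    using R_unbiased[OF assms(1)[unfolded F_def]] assms(2) by (simp add: F_def square_integrable_def)
  with assms show ?thesis
    by (intro integral_inner_eq_if_cond_exp_eq square_integrable_R)
qed

lemma integral_norm_sq_R_le:
  assumes "y \<in> borel_measurable (F t)" "square_integrable M y"
  shows "(\<integral>w. (norm (R t w (y w)))\<^sup>2 \<partial>M) \<le> (1 + \<omega>) * (\<integral>w. (norm (y w))\<^sup>2 \<partial>M)"
proof -
  have Ry: "square_integrable M (\<lambda>w. R t w (y w))"
    by (rule square_integrable_R[OF assms])
  have "(norm (R t w (y w)))\<^sup>2 = (norm (R t w (y w) - y w))\<^sup>2 + 2 * (y w \<bullet> R t w (y w)) - (norm (y w))\<^sup>2"
    for w
    by (simp add: power2_norm_eq_inner inner_diff_left inner_diff_right inner_commute)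
  then have "(\<integral>w. (norm (R t w (y w)))\<^sup>2 \<partial>M)
      = (\<integral>w. (norm (R t w (y w) - y w))\<^sup>2 \<partial>M) + 2 * (\<integral>w. y w \<bullet> R t w (y w) \<partial>M)
        - (\<integral>w. (norm (y w))\<^sup>2 \<partial>M)"
    using integral_norm_sq_R_diff_le(1)[OF assms] integrable_inner_if_square_integrable[OF assms(2) Ry]
      assms(2)
    by (simp add: square_integrable_def)
  also have "\<dots> \<le> (1 + \<omega>) * (\<integral>w. (norm (y w))\<^sup>2 \<partial>M)"
    using integral_norm_sq_R_diff_le(2)[OF assms] integral_inner_R[OF assms assms]
    by (simp add: power2_norm_eq_inner algebra_simps)
  finally show ?thesis .
qed

lemma square_integrable_Xh_if:
  assumes "square_integrable M (\<lambda>w. X t w i)" "square_integrable M (\<lambda>w. U t w i)" "i < n"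
  shows "square_integrable M (\<lambda>w. Xh t w i)"
  unfolding Xh_eq using assms
  by (intro square_integrable_diff square_integrable_scaleR
      square_integrable_affinely_bounded[OF finite_measure_M _ g_continuous g_affine_bound])

lemma square_integrable_X_U:
  "i < n \<Longrightarrow> square_integrable M (\<lambda>w. X t w i) \<and> square_integrable M (\<lambda>w. U t w i)"
proof (induction t arbitrary: i)
  case 0
  show ?case
    by (simp add: X_0 U_0 square_integrable_const[OF finite_measure_M])
next
  case (Suc t)
  have Xh: "square_integrable M (\<lambda>w. Xh t w j)" if "j < n" for j
    using Suc.IH[OF that] that by (intro square_integrable_Xh_if) auto
  have "square_integrable M (\<lambda>w. Y t w i)"
    unfolding Y_def using Xh Suc.prems by (rule square_integrable_centered[OF finite_measure_M])
  then have RY: "square_integrable M (\<lambda>w. R t w (Y t w i))"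
    by (rule square_integrable_R[OF Y_measurable_F[OF Suc.prems]])
  have "square_integrable M (\<lambda>w. Xh t w i - (1 / (1 + \<omega>)) *\<^sub>R R t w (Y t w i))"
    using Xh[OF Suc.prems] RY by (intro square_integrable_diff square_integrable_scaleR)
  then have "square_integrable M (\<lambda>w. X (Suc t) w i)"
    by (rule square_integrable_cong[rotated]) (simp add: X_Suc centered_R_Xh)
  moreover have "square_integrable M (\<lambda>w. U t w i + (1 / (\<gamma> * (1 + \<omega>)\<^sup>2)) *\<^sub>R R t w (Y t w i))"
    using Suc.IH[OF Suc.prems] RY by (intro square_integrable_add square_integrable_scaleR) auto
  then have "square_integrable M (\<lambda>w. U (Suc t) w i)"
    by (rule square_integrable_cong[rotated]) (simp add: U_Suc centered_R_Xh)
  ultimately show ?case ..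
qed

lemma square_integrable_Xh: "i < n \<Longrightarrow> square_integrable M (\<lambda>w. Xh t w i)"
  using square_integrable_X_U by (blast intro: square_integrable_Xh_if)

lemma square_integrable_Y: "i < n \<Longrightarrow> square_integrable M (\<lambda>w. Y t w i)"
  unfolding Y_def using square_integrable_Xh by (rule square_integrable_centered[OF finite_measure_M])

subsection \<open>Expected decrease of the Lyapunov function\<close>

definition "Psi t w = (\<Sum>i<n. (1 / \<gamma>) * (norm (X t w i - xstar))\<^sup>2
    + \<gamma> * (1 + \<omega>)\<^sup>2 * (norm (U t w i - ustar i))\<^sup>2)"

definition "V t w i = U t w i - ustar i - (1 / ((1 + \<omega>) * \<gamma>)) *\<^sub>R (Xh t w i - xstar)"

text \<open>Bounds the conditional expectation of Psi (Suc t) given F t: the compressed vector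
  R(Y) is replaced by Y, and its second moment by (1 + \<omega>)|Y|^2.\<close>
definition "Psi_bound t w = (\<Sum>i<n. (1 / \<gamma>) * (norm (Xh t w i - xstar))\<^sup>2
    + \<gamma> * (1 + \<omega>)\<^sup>2 * (norm (U t w i - ustar i))\<^sup>2
    + (2 * (V t w i \<bullet> Y t w i) + 2 / ((1 + \<omega>) * \<gamma>) * (norm (Y t w i))\<^sup>2))"

definition "rate = max ((1 - \<gamma> * \<mu>)\<^sup>2) (max ((\<gamma> * L - 1)\<^sup>2) (1 - 1 / (1 + \<omega>)\<^sup>2))"

definition "Psi0 = (\<Sum>i<n. (1 / \<gamma>) * (norm (x0 i - xstar))\<^sup>2
    + \<gamma> * (1 + \<omega>)\<^sup>2 * (norm (u0 i - ustar i))\<^sup>2)"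

lemma Psi_0: "Psi 0 w = Psi0"
  by (simp add: Psi_def Psi0_def X_0 U_0)

lemma Psi_nonneg: "0 \<le> Psi t w"
  unfolding Psi_def using gamma_pos by (intro sum_nonneg add_nonneg_nonneg mult_nonneg_nonneg) auto

lemma integrable_Psi: "integrable M (Psi t)"
proof -
  have "square_integrable M (\<lambda>w. X t w i - xstar)" "square_integrable M (\<lambda>w. U t w i - ustar i)"
    if "i < n" for i
    using square_integrable_X_U[OF that]
    by (auto intro: square_integrable_diff square_integrable_const[OF finite_measure_M])
  then show ?thesis
    unfolding Psi_def square_integrable_def
    by (auto intro!: Bochner_Integration.integrable_sum Bochner_Integration.integrable_add
        integrable_mult_right)
qed

lemma Psi_Suc_eq:
  assumes "w \<in> space M"
  shows "Psi (Suc t) w = (\<Sum>i<n. (1 / \<gamma>) * (norm (Xh t w i - xstar))\<^sup>2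
      + \<gamma> * (1 + \<omega>)\<^sup>2 * (norm (U t w i - ustar i))\<^sup>2
      + (2 * (V t w i \<bullet> R t w (Y t w i)) + 2 / (\<gamma> * (1 + \<omega>)\<^sup>2) * (norm (R t w (Y t w i)))\<^sup>2))"
proof -
  have a: "0 < 1 + \<omega>"
    using omega_nonneg by simp
  have "X (Suc t) w i - xstar = (Xh t w i - xstar) - (1 / (1 + \<omega>)) *\<^sub>R R t w (Y t w i)"
    and "U (Suc t) w i - ustar i = (U t w i - ustar i) + (1 / (\<gamma> * (1 + \<omega>)\<^sup>2)) *\<^sub>R R t w (Y t w i)"
    for i
    using assms by (simp_all add: X_Suc U_Suc centered_R_Xh algebra_simps)
  then show ?thesis
    unfolding Psi_def V_def by (simp only: lyapunov_update_expansion[OF gamma_pos a] add.assoc)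
qed

lemma V_measurable_F: "i < n \<Longrightarrow> (\<lambda>w. V t w i) \<in> borel_measurable (F t)"
  unfolding V_def using Xh_measurable_F U_measurable_F[OF order.refl]
  by (auto intro!: borel_measurable_diff borel_measurable_scaleR)

lemma square_integrable_step_terms:
  assumes "i < n"
  shows "square_integrable M (\<lambda>w. Xh t w i - xstar)"
    and "square_integrable M (\<lambda>w. U t w i - ustar i)"
    and "square_integrable M (\<lambda>w. V t w i)"
    and "square_integrable M (\<lambda>w. R t w (Y t w i))"
proof -
  show Xh: "square_integrable M (\<lambda>w. Xh t w i - xstar)"
    using square_integrable_Xh[OF assms]
    by (intro square_integrable_diff square_integrable_const[OF finite_measure_M])
  show U: "square_integrable M (\<lambda>w. U t w i - ustar i)"
    using square_integrable_X_U[OF assms]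
    by (auto intro!: square_integrable_diff square_integrable_const[OF finite_measure_M])
  show "square_integrable M (\<lambda>w. V t w i)"
    unfolding V_def by (rule square_integrable_diff[OF U square_integrable_scaleR[OF Xh]])
  show "square_integrable M (\<lambda>w. R t w (Y t w i))"
    by (rule square_integrable_R[OF Y_measurable_F[OF assms] square_integrable_Y[OF assms]])
qed

lemma integral_compressed_terms_le:
  assumes i: "i < n"
  shows "(\<integral>w. 2 * (V t w i \<bullet> R t w (Y t w i))
      + 2 / (\<gamma> * (1 + \<omega>)\<^sup>2) * (norm (R t w (Y t w i)))\<^sup>2 \<partial>M)
    \<le> (\<integral>w. 2 * (V t w i \<bullet> Y t w i) + 2 / ((1 + \<omega>) * \<gamma>) * (norm (Y t w i))\<^sup>2 \<partial>M)"
proof -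
  note Y = Y_measurable_F[OF i] square_integrable_Y[OF i]
  note V = V_measurable_F[OF i] square_integrable_step_terms(3)[OF i]
  note RY = square_integrable_step_terms(4)[OF i]
  have a: "0 < 1 + \<omega>"
    using omega_nonneg by simp
  have "(\<integral>w. 2 * (V t w i \<bullet> R t w (Y t w i))
      + 2 / (\<gamma> * (1 + \<omega>)\<^sup>2) * (norm (R t w (Y t w i)))\<^sup>2 \<partial>M)
    = 2 * (\<integral>w. V t w i \<bullet> R t w (Y t w i) \<partial>M)
      + 2 / (\<gamma> * (1 + \<omega>)\<^sup>2) * (\<integral>w. (norm (R t w (Y t w i)))\<^sup>2 \<partial>M)"
    using integrable_inner_if_square_integrable[OF V(2) RY] RY
    unfolding square_integrable_def by simp
  also have "\<dots> \<le> 2 * (\<integral>w. V t w i \<bullet> Y t w i \<partial>M)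
      + 2 / (\<gamma> * (1 + \<omega>)\<^sup>2) * ((1 + \<omega>) * (\<integral>w. (norm (Y t w i))\<^sup>2 \<partial>M))"
    unfolding integral_inner_R[OF Y V] using integral_norm_sq_R_le[OF Y] gamma_pos
    by (intro add_left_mono mult_left_mono) simp_all
  also have "\<dots> = (\<integral>w. 2 * (V t w i \<bullet> Y t w i) + 2 / ((1 + \<omega>) * \<gamma>) * (norm (Y t w i))\<^sup>2 \<partial>M)"
    using integrable_inner_if_square_integrable[OF V(2) Y(2)] Y(2) a
    unfolding square_integrable_def by (simp add: power2_eq_square)
  finally show ?thesis .
qed

lemma integrable_Psi_bound: "integrable M (Psi_bound t)"
  and integral_Psi_Suc_le: "(\<integral>w. Psi (Suc t) w \<partial>M) \<le> (\<integral>w. Psi_bound t w \<partial>M)"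
proof -
  define P where "P w = (\<Sum>i<n. (1 / \<gamma>) * (norm (Xh t w i - xstar))\<^sup>2
    + \<gamma> * (1 + \<omega>)\<^sup>2 * (norm (U t w i - ustar i))\<^sup>2)" for w
  define N where "N i w = 2 * (V t w i \<bullet> R t w (Y t w i))
    + 2 / (\<gamma> * (1 + \<omega>)\<^sup>2) * (norm (R t w (Y t w i)))\<^sup>2" for i w
  define N' where "N' i w = 2 * (V t w i \<bullet> Y t w i) + 2 / ((1 + \<omega>) * \<gamma>) * (norm (Y t w i))\<^sup>2"
    for i w
  have int_P: "integrable M P"
    using square_integrable_step_terms(1,2) unfolding P_def square_integrable_def
    by (auto intro!: Bochner_Integration.integrable_sum integrable_mult_right)
  have int_N: "integrable M (N i)" "integrable M (N' i)" if "i < n" for i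
    using integrable_inner_if_square_integrable[OF square_integrable_step_terms(3,4)[OF that]]
      integrable_inner_if_square_integrable[OF square_integrable_step_terms(3) square_integrable_Y,
        OF that that]
      square_integrable_step_terms(4)[OF that] square_integrable_Y[OF that]
    unfolding N_def N'_def square_integrable_def by auto
  have Psi_bound_eq: "Psi_bound t = (\<lambda>w. P w + (\<Sum>i<n. N' i w))"
    unfolding fun_eq_iff Psi_bound_def P_def N'_def by (simp add: sum.distrib)
  have "(\<integral>w. Psi (Suc t) w \<partial>M) = (\<integral>w. P w + (\<Sum>i<n. N i w) \<partial>M)"
    using Psi_Suc_eq by (intro Bochner_Integration.integral_cong) (simp_all add: P_def N_def sum.distrib)
  also have "\<dots> = (\<integral>w. P w \<partial>M) + (\<Sum>i<n. \<integral>w. N i w \<partial>M)"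
    using int_P int_N by (intro integral_add_sum) auto
  also have "\<dots> \<le> (\<integral>w. P w \<partial>M) + (\<Sum>i<n. \<integral>w. N' i w \<partial>M)"
    unfolding N_def N'_def using integral_compressed_terms_le by (intro add_left_mono sum_mono) simp
  also have "\<dots> = (\<integral>w. Psi_bound t w \<partial>M)"
    unfolding Psi_bound_eq using int_P int_N by (intro integral_add_sum[symmetric]) auto
  finally show "(\<integral>w. Psi (Suc t) w \<partial>M) \<le> (\<integral>w. Psi_bound t w \<partial>M)" .
  show "integrable M (Psi_bound t)"
    unfolding Psi_bound_eq using int_P int_N
    by (intro Bochner_Integration.integrable_add Bochner_Integration.integrable_sum) auto
qed

lemma gradient_step_term_le:
  assumes i: "i < n"
  shows "(1 / \<gamma>) * (norm ((Xh t w i - xstar) + \<gamma> *\<^sub>R (U t w i - ustar i)))\<^sup>2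
      + \<gamma> * ((1 + \<omega>)\<^sup>2 - 1) * (norm (U t w i - ustar i))\<^sup>2
    \<le> rate * ((1 / \<gamma>) * (norm (X t w i - xstar))\<^sup>2 + \<gamma> * (1 + \<omega>)\<^sup>2 * (norm (U t w i - ustar i))\<^sup>2)"
proof -
  have "(Xh t w i - xstar) + \<gamma> *\<^sub>R (U t w i - ustar i)
      = (X t w i - \<gamma> *\<^sub>R g i (X t w i)) - (xstar - \<gamma> *\<^sub>R g i xstar)"
    by (simp add: Xh_eq ustar_def algebra_simps)
  then have "(norm ((Xh t w i - xstar) + \<gamma> *\<^sub>R (U t w i - ustar i)))\<^sup>2
      \<le> max ((1 - \<gamma> * \<mu>)\<^sup>2) ((\<gamma> * L - 1)\<^sup>2) * (norm (X t w i - xstar))\<^sup>2"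
    using gradient_step_contraction[OF grad[OF i] sconvex[OF i] smooth[OF i] mu_le_L gamma_pos]
    by (simp only:)
  also have "\<dots> \<le> rate * (norm (X t w i - xstar))\<^sup>2"
    by (intro mult_right_mono) (simp_all add: rate_def)
  finally have "(1 / \<gamma>) * (norm ((Xh t w i - xstar) + \<gamma> *\<^sub>R (U t w i - ustar i)))\<^sup>2
      \<le> rate * ((1 / \<gamma>) * (norm (X t w i - xstar))\<^sup>2)"
    using gamma_pos by (simp add: divide_right_mono)
  moreover have "\<gamma> * ((1 + \<omega>)\<^sup>2 - 1) = (1 - 1 / (1 + \<omega>)\<^sup>2) * (\<gamma> * (1 + \<omega>)\<^sup>2)"
    using omega_nonneg by (simp add: field_simps)
  then have "\<gamma> * ((1 + \<omega>)\<^sup>2 - 1) * (norm (U t w i - ustar i))\<^sup>2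
      \<le> rate * (\<gamma> * (1 + \<omega>)\<^sup>2 * (norm (U t w i - ustar i))\<^sup>2)"
    using gamma_pos by (simp add: rate_def mult_right_mono mult.assoc)
  ultimately show ?thesis
    by (simp add: distrib_left)
qed

lemma Psi_bound_le: "Psi_bound t w \<le> rate * Psi t w"
proof -
  define A where "A i = Xh t w i - xstar" for i
  define B where "B i = U t w i - ustar i" for i
  have Y: "Y t w i = centered n A i" for i
    unfolding Y_def A_def by (rule centered_diff_const[OF n_pos, symmetric])
  have "(\<Sum>i<n. B i) = 0"
    using sum_U sum_ustar by (simp add: B_def sum_subtractf)
  then have BY: "(\<Sum>i<n. B i \<bullet> Y t w i) = (\<Sum>i<n. B i \<bullet> A i)"
    unfolding Y by (rule sum_inner_centered)
  have AY: "(\<Sum>i<n. A i \<bullet> Y t w i) = (\<Sum>i<n. (norm (Y t w i))\<^sup>2)"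
    unfolding Y by (rule sum_inner_centered_self[OF n_pos])
  have "Psi_bound t w = (\<Sum>i<n. (1 / \<gamma>) * (norm (A i))\<^sup>2 + \<gamma> * (1 + \<omega>)\<^sup>2 * (norm (B i))\<^sup>2)
      + 2 * (\<Sum>i<n. B i \<bullet> Y t w i)
      - 2 / ((1 + \<omega>) * \<gamma>) * ((\<Sum>i<n. A i \<bullet> Y t w i) - (\<Sum>i<n. (norm (Y t w i))\<^sup>2))"
    by (simp add: Psi_bound_def V_def A_def B_def inner_diff_left sum.distrib sum_subtractf
        sum_distrib_left algebra_simps)
  also have "\<dots> = (\<Sum>i<n. (1 / \<gamma>) * (norm (A i))\<^sup>2 + \<gamma> * (1 + \<omega>)\<^sup>2 * (norm (B i))\<^sup>2
      + 2 * (B i \<bullet> A i))"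
    unfolding AY BY by (simp add: sum.distrib sum_distrib_left)
  also have "\<dots> = (\<Sum>i<n. (1 / \<gamma>) * (norm (A i + \<gamma> *\<^sub>R B i))\<^sup>2
      + \<gamma> * ((1 + \<omega>)\<^sup>2 - 1) * (norm (B i))\<^sup>2)"
  proof (rule sum.cong[OF refl])
    fix i
    have "(norm (A i + \<gamma> *\<^sub>R B i))\<^sup>2 = (norm (A i))\<^sup>2 + 2 * \<gamma> * (B i \<bullet> A i) + \<gamma>\<^sup>2 * (norm (B i))\<^sup>2"
      by (simp add: power2_norm_eq_inner inner_add_left inner_add_right inner_commute algebra_simps)
        (simp add: power2_eq_square)
    with gamma_pos show "(1 / \<gamma>) * (norm (A i))\<^sup>2 + \<gamma> * (1 + \<omega>)\<^sup>2 * (norm (B i))\<^sup>2 + 2 * (B i \<bullet> A i)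
        = (1 / \<gamma>) * (norm (A i + \<gamma> *\<^sub>R B i))\<^sup>2 + \<gamma> * ((1 + \<omega>)\<^sup>2 - 1) * (norm (B i))\<^sup>2"
      by (simp add: field_simps power2_eq_square)
  qed
  also have "\<dots> \<le> (\<Sum>i<n. rate * ((1 / \<gamma>) * (norm (X t w i - xstar))\<^sup>2
      + \<gamma> * (1 + \<omega>)\<^sup>2 * (norm (B i))\<^sup>2))"
    unfolding A_def B_def by (rule sum_mono, rule gradient_step_term_le) simp
  also have "\<dots> = rate * Psi t w"
    by (simp add: Psi_def B_def sum_distrib_left)
  finally show ?thesis .
qed

lemma rate_nonneg: "0 \<le> rate"
  by (simp add: rate_def le_max_iff_disj)

lemma rate_lt_1: "rate < 1"
  unfolding rate_def using mu_pos mu_le_L gamma_pos gamma_lt omega_nonneg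
  by (rule contraction_factor_lt_1)

lemma integral_Psi_Suc_le_rate: "(\<integral>w. Psi (Suc t) w \<partial>M) \<le> rate * (\<integral>w. Psi t w \<partial>M)"
proof -
  have "(\<integral>w. Psi (Suc t) w \<partial>M) \<le> (\<integral>w. Psi_bound t w \<partial>M)"
    by (rule integral_Psi_Suc_le)
  also have "\<dots> \<le> (\<integral>w. rate * Psi t w \<partial>M)"
    by (intro integral_mono integrable_Psi_bound integrable_mult_right integrable_Psi Psi_bound_le)
  finally show ?thesis
    by simp
qed

lemma integral_Psi_le: "(\<integral>w. Psi t w \<partial>M) \<le> rate ^ t * Psi0"
proof (induction t)
  case 0
  show ?case
    using prob_space.prob_space[OF prob] by (simp add: Psi_0)
next
  case (Suc t)
  with integral_Psi_Suc_le_rate[of t] mult_left_mono[OF Suc rate_nonneg] show ?case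
    by simp
qed

lemma nn_integral_Psi_le: "(\<integral>\<^sup>+w. ennreal (Psi t w) \<partial>M) \<le> ennreal (rate ^ t * Psi0)"
  using integral_Psi_le[of t]
  by (simp add: nn_integral_eq_integral[OF integrable_Psi] Psi_nonneg ennreal_leI)

lemma AE_Psi_tendsto_0: "AE w in M. (\<lambda>t. Psi t w) \<longlonglongrightarrow> 0"
proof (rule AE_tendsto_0_if_summable_nn_integral[OF _ Psi_nonneg nn_integral_Psi_le])
  show "Psi t \<in> borel_measurable M" for t
    using integrable_Psi by (rule borel_measurable_integrable)
  have "0 \<le> Psi0"
    using Psi_nonneg[of 0] by (simp add: Psi_0)
  then show "summable (\<lambda>t. rate ^ t * Psi0)" "0 \<le> rate ^ t * Psi0" for t
    using rate_nonneg rate_lt_1 by (auto intro!: summable_mult2 summable_geometric)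
qed

lemma tendsto_iterates_if_Psi_tendsto_0:
  assumes Psi: "(\<lambda>t. Psi t w) \<longlonglongrightarrow> 0" and i: "i < n"
  shows "(\<lambda>t. X t w i) \<longlonglongrightarrow> xstar" and "(\<lambda>t. Xh t w i) \<longlonglongrightarrow> xstar"
    and "(\<lambda>t. U t w i) \<longlonglongrightarrow> ustar i"
proof -
  have X_le: "(1 / \<gamma>) * (norm (X t w i - xstar))\<^sup>2 \<le> Psi t w"
    and U_le: "\<gamma> * (1 + \<omega>)\<^sup>2 * (norm (U t w i - ustar i))\<^sup>2 \<le> Psi t w" for t
  proof -
    have "(1 / \<gamma>) * (norm (X t w i - xstar))\<^sup>2 + \<gamma> * (1 + \<omega>)\<^sup>2 * (norm (U t w i - ustar i))\<^sup>2
        \<le> Psi t w"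
      unfolding Psi_def using i gamma_pos by (intro member_le_sum) auto
    moreover have "0 \<le> (1 / \<gamma>) * (norm (X t w i - xstar))\<^sup>2"
      and "0 \<le> \<gamma> * (1 + \<omega>)\<^sup>2 * (norm (U t w i - ustar i))\<^sup>2"
      using gamma_pos by simp_all
    ultimately show "(1 / \<gamma>) * (norm (X t w i - xstar))\<^sup>2 \<le> Psi t w"
      and "\<gamma> * (1 + \<omega>)\<^sup>2 * (norm (U t w i - ustar i))\<^sup>2 \<le> Psi t w"
      by linarith+
  qed
  show X: "(\<lambda>t. X t w i) \<longlonglongrightarrow> xstar"
    using gamma_pos by (intro tendsto_if_weighted_norm_sq_le[OF Psi _ X_le]) simp
  show U: "(\<lambda>t. U t w i) \<longlonglongrightarrow> ustar i"
    using gamma_pos omega_nonneg by (intro tendsto_if_weighted_norm_sq_le[OF Psi _ U_le]) simp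
  have "isCont (g i) xstar"
    using g_continuous[OF i] by (simp add: continuous_on_eq_continuous_at)
  then have "(\<lambda>t. X t w i - \<gamma> *\<^sub>R g i (X t w i) - \<gamma> *\<^sub>R U t w i)
      \<longlonglongrightarrow> xstar - \<gamma> *\<^sub>R g i xstar - \<gamma> *\<^sub>R ustar i"
    by (intro tendsto_intros X U isCont_tendsto_compose[OF _ X])
  then show "(\<lambda>t. Xh t w i) \<longlonglongrightarrow> xstar"
    by (simp add: Xh_eq ustar_def)
qed

end

theorem theorem10:

  fixes M :: "'w measure"
    and n :: nat
    and f :: "nat \<Rightarrow> 'd::euclidean_space \<Rightarrow> real"
    and g :: "nat \<Rightarrow> 'd \<Rightarrow> 'd"
    and \<mu> L \<gamma> \<omega> :: real
    and R :: "nat \<Rightarrow> 'w \<Rightarrow> 'd \<Rightarrow> 'd"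
    and x0 u0 :: "nat \<Rightarrow> 'd"
    and xstar :: 'd
  assumes prob: "prob_space M"
    and n_pos: "n \<ge> 1"
    and mu_pos: "0 < \<mu>" and mu_le_L: "\<mu> \<le> L"
    and grad: "\<And>i x. i < n \<Longrightarrow> GDERIV (f i) x :> g i x"
    and sconvex: "\<And>i. i < n \<Longrightarrow> strongly_convex_on UNIV \<mu> (f i)"
    and smooth: "\<And>i x y. i < n \<Longrightarrow> norm (g i x - g i y) \<le> L * norm (x - y)"
    and gamma_pos: "0 < \<gamma>" and gamma_lt: "\<gamma> < 2 / L"
    and omega_nonneg: "0 \<le> \<omega>"
    and u0_sum: "(\<Sum>i<n. u0 i) = 0"
    and R_linear: "\<And>t w. w \<in> space M \<Longrightarrow> linear (R t w)"
    and R_meas: "\<And>t v. (\<lambda>w. R t w v) \<in> borel_measurable M"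
    and R_unbiased: "\<And>t y. y \<in> borel_measurable (rpfl_filt M n g \<gamma> \<omega> R x0 u0 t)
        \<Longrightarrow> integrable M (\<lambda>w. (norm (y w))\<^sup>2)
        \<Longrightarrow> AE w in M. \<forall>b\<in>Basis.
              real_cond_exp M (rpfl_filt M n g \<gamma> \<omega> R x0 u0 t) (\<lambda>w'. R t w' (y w') \<bullet> b) w = y w \<bullet> b"
    and R_variance: "\<And>t y. y \<in> borel_measurable (rpfl_filt M n g \<gamma> \<omega> R x0 u0 t)
        \<Longrightarrow> AE w in M.
              nn_cond_exp M (rpfl_filt M n g \<gamma> \<omega> R x0 u0 t) (\<lambda>w'. ennreal ((norm (R t w' (y w') - y w'))\<^sup>2)) w
                \<le> ennreal (\<omega> * (norm (y w))\<^sup>2)"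
    and xstar_min: "\<And>y. (\<Sum>i<n. f i xstar) \<le> (\<Sum>i<n. f i y)"
  shows
    "let ustar = (\<lambda>i. - g i xstar);
         X = (\<lambda>t w. fst (rpfl n g \<gamma> \<omega> R x0 u0 t w));
         U = (\<lambda>t w. snd (rpfl n g \<gamma> \<omega> R x0 u0 t w));
         Xh = (\<lambda>t w. rpfl_xhat g \<gamma> (rpfl n g \<gamma> \<omega> R x0 u0 t w));
         \<Psi> = (\<lambda>t w. \<Sum>i<n. (1 / \<gamma>) * (norm (X t w i - xstar))\<^sup>2
                            + \<gamma> * (1 + \<omega>)\<^sup>2 * (norm (U t w i - ustar i))\<^sup>2);
         \<Psi>0 = (\<Sum>i<n. (1 / \<gamma>) * (norm (x0 i - xstar))\<^sup>2 + \<gamma> * (1 + \<omega>)\<^sup>2 * (norm (u0 i - ustar i))\<^sup>2);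
         c = max ((1 - \<gamma> * \<mu>)\<^sup>2) (max ((\<gamma> * L - 1)\<^sup>2) (1 - 1 / (1 + \<omega>)\<^sup>2))
     in c < 1
        \<and> (\<forall>t. (\<integral>\<^sup>+ w. ennreal (\<Psi> t w) \<partial>M) \<le> ennreal (c ^ t * \<Psi>0))
        \<and> (AE w in M. \<forall>i<n. (\<lambda>t. X t w i) \<longlonglongrightarrow> xstar
                           \<and> (\<lambda>t. Xh t w i) \<longlonglongrightarrow> xstar
                           \<and> (\<lambda>t. U t w i) \<longlonglongrightarrow> ustar i)"
proof -
  interpret randprox_fl M n f g \<mu> L \<gamma> \<omega> R x0 u0 xstar
    using assms unfolding randprox_fl_def by blast
  have "AE w in M. \<forall>i<n. (\<lambda>t. X t w i) \<longlonglongrightarrow> xstar \<and> (\<lambda>t. Xh t w i) \<longlonglongrightarrow> xstar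
      \<and> (\<lambda>t. U t w i) \<longlonglongrightarrow> ustar i"
    using AE_Psi_tendsto_0 by eventually_elim (blast intro: tendsto_iterates_if_Psi_tendsto_0)
  with rate_lt_1 nn_integral_Psi_le show ?thesis
    unfolding Let_def Psi_def Psi0_def rate_def X_def U_def Xh_def ustar_def by blast
qed

end
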